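(* Let $E$ be an arbitrary graph and consider the groupoid $\mathcal{G}_E$ with cocycle $\widetilde{w}:\mathcal{G}_E\to\mathbb{Z}$, $\widetilde{w}(x,k,y)=k$. Then $\widetilde{w}$ is star injective if and only if $|r_E^{-1}(v)|\le1$ for every $v\in E^0$ (i.e. every vertex receives at most one edge).
   Context: Graph $E=(E^0,E^1,r_E,s_E)$; paths, $E^*$ (finite paths, including vertices), $E^\infty$ (infinite paths); $|\alpha|$ is the length of a path. A vertex is regular if it emits a finite nonzero number of edges. $X=E^\infty\cup\{\mu\in E^*: r(\mu)\text{ is not regular}\}$. $\mathcal{G}_E=\{(\alpha x,|\alpha|-|\beta|,\beta x):\alpha,\beta\in E^*,\ x\in X,\ r(\alpha)=r(\beta)=s(x)\}$, with $(x,k,y)$ a morphism from $y$ (domain) to $x$ (range), composition $(x,k,y)(y,l,z)=(x,k+l,z)$, inverse $(x,k,y)^{-1}=(y,-k,x)$, and unit space identified with $X$. Viewing $\mathbb{Z}$ as a one-object category, a functor $F:\mathcal{C}\to\mathcal{D}$ is star injective if for each object $x$ its restriction to $\operatorname{Star}(x)=\{\text{morphisms with domain }x\}$ is injective; here $\operatorname{Star}(x)=\{(y,k,x)\in\mathcal{G}_E\}$. *)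

theory Defs
  imports Main
begin

text \<open>A finite path is a pair (v, es): a vertex v (length 0) or a list of edges es = e1...en
  with r(e_i) = s(e_(i+1)) and v = s(e1).\<close>

definition graph :: "'v set \<Rightarrow> 'e set \<Rightarrow> ('e \<Rightarrow> 'v) \<Rightarrow> ('e \<Rightarrow> 'v) \<Rightarrow> bool" where
  "graph E0 E1 r s \<longleftrightarrow> (\<forall>e\<in>E1. r e \<in> E0 \<and> s e \<in> E0)"

definition regular_vertex :: "'e set \<Rightarrow> ('e \<Rightarrow> 'v) \<Rightarrow> 'v \<Rightarrow> bool" where
  "regular_vertex E1 s v \<longleftrightarrow> finite {e\<in>E1. s e = v} \<and> {e\<in>E1. s e = v} \<noteq> {}"

definition finite_path :: "'v set \<Rightarrow> 'e set \<Rightarrow> ('e \<Rightarrow> 'v) \<Rightarrow> ('e \<Rightarrow> 'v) \<Rightarrow> 'v \<times> 'e list \<Rightarrow> bool" where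
  "finite_path E0 E1 r s p \<longleftrightarrow> (case p of (v, es) \<Rightarrow>
     v \<in> E0 \<and> set es \<subseteq> E1 \<and> (es \<noteq> [] \<longrightarrow> s (hd es) = v) \<and>
     (\<forall>i. Suc i < length es \<longrightarrow> r (es ! i) = s (es ! Suc i)))"

definition path_range :: "('e \<Rightarrow> 'v) \<Rightarrow> 'v \<times> 'e list \<Rightarrow> 'v" where
  "path_range r p = (case p of (v, es) \<Rightarrow> if es = [] then v else r (last es))"

definition path_len :: "'v \<times> 'e list \<Rightarrow> nat" where
  "path_len p = length (snd p)"

definition infinite_path :: "'e set \<Rightarrow> ('e \<Rightarrow> 'v) \<Rightarrow> ('e \<Rightarrow> 'v) \<Rightarrow> (nat \<Rightarrow> 'e) \<Rightarrow> bool" where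
  "infinite_path E1 r s f \<longleftrightarrow> (\<forall>n. f n \<in> E1 \<and> r (f n) = s (f (Suc n)))"

datatype ('v, 'e) bpath = FinP 'v "'e list" | InfP "nat \<Rightarrow> 'e"

fun bpath_src :: "('e \<Rightarrow> 'v) \<Rightarrow> ('v, 'e) bpath \<Rightarrow> 'v" where
  "bpath_src s (FinP v es) = v"
| "bpath_src s (InfP f) = s (f 0)"

definition boundary_paths :: "'v set \<Rightarrow> 'e set \<Rightarrow> ('e \<Rightarrow> 'v) \<Rightarrow> ('e \<Rightarrow> 'v) \<Rightarrow> ('v, 'e) bpath set" where
  "boundary_paths E0 E1 r s =
     {InfP f | f. infinite_path E1 r s f} \<union>
     {FinP v es | v es. finite_path E0 E1 r s (v, es) \<and> \<not> regular_vertex E1 s (path_range r (v, es))}"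

fun concat_path :: "'v \<times> 'e list \<Rightarrow> ('v, 'e) bpath \<Rightarrow> ('v, 'e) bpath" where
  "concat_path (v, es) (FinP w fs) = FinP v (es @ fs)"
| "concat_path (v, es) (InfP f) = InfP (\<lambda>n. if n < length es then es ! n else f (n - length es))"

text \<open>The groupoid G_E as a set of triples (range, k, domain).\<close>
definition graph_groupoid :: "'v set \<Rightarrow> 'e set \<Rightarrow> ('e \<Rightarrow> 'v) \<Rightarrow> ('e \<Rightarrow> 'v)
    \<Rightarrow> (('v, 'e) bpath \<times> int \<times> ('v, 'e) bpath) set" where
  "graph_groupoid E0 E1 r s =
     {(concat_path \<alpha> x, int (path_len \<alpha>) - int (path_len \<beta>), concat_path \<beta> x) | \<alpha> \<beta> x.
        finite_path E0 E1 r s \<alpha> \<and> finite_path E0 E1 r s \<beta> \<and> x \<in> boundary_paths E0 E1 r s \<and>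
        path_range r \<alpha> = bpath_src s x \<and> path_range r \<beta> = bpath_src s x}"

definition star :: "('a \<times> int \<times> 'a) set \<Rightarrow> 'a \<Rightarrow> ('a \<times> int \<times> 'a) set" where
  "star G x = {g \<in> G. snd (snd g) = x}"

definition star_injective :: "('a \<times> int \<times> 'a) set \<Rightarrow> 'a set \<Rightarrow> ('a \<times> int \<times> 'a \<Rightarrow> int) \<Rightarrow> bool" where
  "star_injective G Obj F \<longleftrightarrow> (\<forall>x\<in>Obj. inj_on F (star G x))"

definition cocycle_w :: "'a \<times> int \<times> 'a \<Rightarrow> int" where
  "cocycle_w g = fst (snd g)"

end

theory Submission
  imports Defs
begin

text \<open>If every vertex receives at most one edge, paths can be traced backwards uniquely: a finite
  path is determined by its range and length, an infinite path by any of its tails. Hence an arrow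
  (\<alpha>x, k, \<beta>x) is determined by its domain \<beta>x and its degree k: the range is the path of length
  |\<beta>x| + k ending where \<beta>x ends, resp. the infinite path that eventually agrees with \<beta>x shifted
  by k. Conversely, two edges e \<noteq> f into v give arrows (ex, 1, x) \<noteq> (fx, 1, x) in the star of a
  boundary path x starting at v, and such an x always exists.\<close>

lemma finite_path_snoc:
  assumes "finite_path E0 E1 r s (a, as @ [e])"
  shows "finite_path E0 E1 r s (a, as) \<and> path_range r (a, as) = s e \<and> e \<in> E1"
proof -
  from assms have A: "a \<in> E0" "set as \<subseteq> E1" "e \<in> E1"
    and H: "s (hd (as @ [e])) = a"
    and C: "\<forall>i. Suc i < length as + 1 \<longrightarrow> r ((as@[e]) ! i) = s ((as@[e]) ! Suc i)"
    unfolding finite_path_def by auto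
  have "finite_path E0 E1 r s (a, as)"
    unfolding finite_path_def
  proof (simp add: A, intro conjI impI allI)
    assume "as \<noteq> []" thus "s (hd as) = a" using H by simp
  next
    fix i assume "Suc i < length as"
    thus "r (as ! i) = s (as ! Suc i)" using C[rule_format, of i]
      by (simp add: nth_append)
  qed
  moreover have "path_range r (a, as) = s e"
  proof (cases "as = []")
    case True thus ?thesis using H by (simp add: path_range_def)
  next
    case False
    then have "r (as ! (length as - 1)) = s ((as@[e]) ! length as)"
      using C[rule_format, of "length as - 1"] by (simp add: nth_append)
    thus ?thesis using False by (simp add: path_range_def last_conv_nth)
  qed
  ultimately show ?thesis using A by simp
qed

lemma finite_path_append:
  assumes "finite_path E0 E1 r s (a, as)" "finite_path E0 E1 r s (w, fs)"
    "path_range r (a, as) = w"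
  shows "finite_path E0 E1 r s (a, as @ fs)"
proof -
  from assms have A: "a \<in> E0" "set as \<subseteq> E1" "set fs \<subseteq> E1"
    and H1: "as \<noteq> [] \<longrightarrow> s (hd as) = a" and H2: "fs \<noteq> [] \<longrightarrow> s (hd fs) = w"
    and C1: "\<forall>i. Suc i < length as \<longrightarrow> r (as ! i) = s (as ! Suc i)"
    and C2: "\<forall>i. Suc i < length fs \<longrightarrow> r (fs ! i) = s (fs ! Suc i)"
    and R: "(if as = [] then a else r (last as)) = w"
    unfolding finite_path_def path_range_def by auto
  show ?thesis unfolding finite_path_def
  proof (simp only: prod.case, intro conjI impI allI)
    show "a \<in> E0" "set (as @ fs) \<subseteq> E1" using A by auto
  next
    assume "as @ fs \<noteq> []"
    thus "s (hd (as @ fs)) = a" using H1 H2 R by (cases "as = []") auto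
  next
    fix i assume i: "Suc i < length (as @ fs)"
    consider "Suc i < length as" | "Suc i = length as" | "length as \<le> i" by linarith
    thus "r ((as @ fs) ! i) = s ((as @ fs) ! Suc i)"
    proof cases
      case 1 thus ?thesis using C1 by (simp add: nth_append)
    next
      case 2
      hence "as \<noteq> []" "fs \<noteq> []" "i = length as - 1" using i by auto
      hence "r (as ! i) = w" "s (fs ! 0) = w" using R H2
        by (auto simp: last_conv_nth hd_conv_nth)
      thus ?thesis using 2 by (simp add: nth_append)
    next
      case 3
      hence "Suc (i - length as) < length fs" using i by auto
      hence "r (fs ! (i - length as)) = s (fs ! Suc (i - length as))" using C2 by blast
      moreover have "Suc i - length as = Suc (i - length as)" using 3 by linarith
      ultimately show ?thesis using 3 by (simp add: nth_append)
    qed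
  qed
qed

lemma path_range_append:
  "path_range r (a, as) = w \<Longrightarrow> path_range r (a, as @ fs) = path_range r (w, fs)"
  by (cases fs) (auto simp: path_range_def)

lemma infinite_path_prepend:
  assumes "finite_path E0 E1 r s (a, as)" "infinite_path E1 r s f"
    "path_range r (a, as) = s (f 0)"
  shows "infinite_path E1 r s (\<lambda>n. if n < length as then as ! n else f (n - length as))"
  unfolding infinite_path_def
proof (intro allI conjI)
  fix n
  show "(if n < length as then as ! n else f (n - length as)) \<in> E1"
    using assms(1,2) by (auto simp: finite_path_def infinite_path_def)
  consider "Suc n < length as" | "Suc n = length as" | "length as \<le> n" by linarith
  thus "r (if n < length as then as ! n else f (n - length as))
      = s (if Suc n < length as then as ! Suc n else f (Suc n - length as))"
  proof cases
    case 1 thus ?thesis using assms(1) by (simp add: finite_path_def)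
  next
    case 2
    hence "as \<noteq> []" "n = length as - 1" by auto
    thus ?thesis using 2 assms(3) by (simp add: path_range_def last_conv_nth)
  next
    case 3
    hence "Suc n - length as = Suc (n - length as)" by linarith
    thus ?thesis using 3 assms(2) by (simp add: infinite_path_def)
  qed
qed

lemma finite_path_eq_if_same_range_length:
  assumes inj: "inj_on r E1"
  shows "finite_path E0 E1 r s (a, as) \<Longrightarrow> finite_path E0 E1 r s (a', as') \<Longrightarrow>
    length as = length as' \<Longrightarrow> path_range r (a, as) = path_range r (a', as') \<Longrightarrow>
    a = a' \<and> as = as'"
proof (induction as arbitrary: as' rule: rev_induct)
  case Nil
  thus ?case by (simp add: path_range_def)
next
  case (snoc e as)
  then obtain as0 e' where as': "as' = as0 @ [e']"
    by (metis length_0_conv rev_exhaust snoc_eq_iff_butlast)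
  note P = finite_path_snoc[OF snoc.prems(1)]
  note P' = finite_path_snoc[OF snoc.prems(2)[unfolded as']]
  have "r e = r e'" using snoc.prems(4) as' by (simp add: path_range_def)
  hence "e = e'" using inj P P' by (meson inj_onD)
  moreover have "a = a' \<and> as = as0"
    using snoc.IH[of as0] P P' snoc.prems(3) as' \<open>e = e'\<close> by simp
  ultimately show ?case using as' by simp
qed

lemma infinite_path_eq_if_eventually_eq:
  assumes inj: "inj_on r E1" and f: "infinite_path E1 r s f" and g: "infinite_path E1 r s g"
    and tail: "\<And>m. N \<le> m \<Longrightarrow> f m = g m"
  shows "f = g"
proof
  have "f m = g m" if "N - d \<le> m" for d m
    using that
  proof (induction d arbitrary: m)
    case 0 thus ?case using tail by simp
  next
    case (Suc d)
    show ?case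
    proof (cases "N - d \<le> m")
      case False
      hence "N - d \<le> Suc m" using Suc.prems by linarith
      hence "r (f m) = r (g m)"
        using Suc.IH f g by (metis infinite_path_def)
      thus ?thesis using inj f g by (meson infinite_path_def inj_onD)
    qed (rule Suc.IH)
  qed
  from this[of N] show "f m = g m" for m by simp
qed

lemma graph_groupoid_range_eq_if_same_domain_degree:
  assumes inj: "inj_on r E1"
    and g1: "(y, k, x) \<in> graph_groupoid E0 E1 r s" and g2: "(y', k, x) \<in> graph_groupoid E0 E1 r s"
  shows "y = y'"
proof -
  obtain a as b bs z where
    y: "y = concat_path (a, as) z" and x: "x = concat_path (b, bs) z"
    and k: "k = int (length as) - int (length bs)"
    and pa: "finite_path E0 E1 r s (a, as)" and pb: "finite_path E0 E1 r s (b, bs)"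
    and z: "z \<in> boundary_paths E0 E1 r s"
    and ra: "path_range r (a, as) = bpath_src s z" and rb: "path_range r (b, bs) = bpath_src s z"
    using g1 unfolding graph_groupoid_def path_len_def by auto
  obtain a' as' b' bs' z' where
    y': "y' = concat_path (a', as') z'" and x': "x = concat_path (b', bs') z'"
    and k': "k = int (length as') - int (length bs')"
    and pa': "finite_path E0 E1 r s (a', as')" and pb': "finite_path E0 E1 r s (b', bs')"
    and z': "z' \<in> boundary_paths E0 E1 r s"
    and ra': "path_range r (a', as') = bpath_src s z'"
    and rb': "path_range r (b', bs') = bpath_src s z'"
    using g2 unfolding graph_groupoid_def path_len_def by auto
  show ?thesis
  proof (cases z)
    case (FinP w fs)
    then obtain w' fs' where z'_def: "z' = FinP w' fs'" using x x' by (cases z') auto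
    have "finite_path E0 E1 r s (w, fs)" "finite_path E0 E1 r s (w', fs')"
      using z z' FinP z'_def by (auto simp: boundary_paths_def)
    hence "finite_path E0 E1 r s (a, as @ fs)" "finite_path E0 E1 r s (a', as' @ fs')"
      using finite_path_append[OF pa] finite_path_append[OF pa'] ra ra' FinP z'_def by auto
    moreover have "path_range r (a, as @ fs) = path_range r (a', as' @ fs')"
      using path_range_append ra rb ra' rb' x x' FinP z'_def by (metis bpath_src.simps(1)
          concat_path.simps(1) bpath.inject(1))
    moreover have "length (as @ fs) = length (as' @ fs')"
    proof -
      have "length bs + length fs = length bs' + length fs'"
        using x x' FinP z'_def by (metis concat_path.simps(1) bpath.inject(1) length_append)
      thus ?thesis using k k' by simp
    qed
    ultimately show ?thesis
      using finite_path_eq_if_same_range_length[OF inj] y y' FinP z'_def by auto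
  next
    case (InfP f)
    then obtain f' where z'_def: "z' = InfP f'" using x x' by (cases z') auto
    define g where "g n = (if n < length as then as ! n else f (n - length as))" for n
    define g' where "g' n = (if n < length as' then as' ! n else f' (n - length as'))" for n
    have "infinite_path E1 r s f" "infinite_path E1 r s f'"
      using z z' InfP z'_def by (auto simp: boundary_paths_def)
    hence "infinite_path E1 r s g" "infinite_path E1 r s g'"
      unfolding g_def g'_def using infinite_path_prepend pa pa' ra ra' InfP z'_def by auto
    moreover have "g m = g' m" if "length as + length as' \<le> m" for m
    proof -
      have "(\<lambda>n. if n < length bs then bs ! n else f (n - length bs)) =
            (\<lambda>n. if n < length bs' then bs' ! n else f' (n - length bs'))"
        using x x' InfP z'_def by simp
      moreover have "m - length as + length bs = m - length as' + length bs'"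
        using that k k' by linarith
      ultimately have "f (m - length as) = f' (m - length as')"
        by (metis (no_types, lifting) add_diff_cancel_right' le_add2 not_le)
      thus ?thesis using that unfolding g_def g'_def by simp
    qed
    ultimately have "g = g'" using infinite_path_eq_if_eventually_eq[OF inj] by blast
    thus ?thesis using y y' InfP z'_def g_def g'_def by simp
  qed
qed

lemma finite_path_of_walk:
  assumes "u 0 \<in> E0" "\<And>i. i < N \<Longrightarrow> e i \<in> E1 \<and> s (e i) = u i \<and> r (e i) = u (Suc i)"
  shows "finite_path E0 E1 r s (u 0, map e [0..<N]) \<and> path_range r (u 0, map e [0..<N]) = u N"
proof -
  have "finite_path E0 E1 r s (u 0, map e [0..<N])"
    using assms by (auto simp: finite_path_def hd_map)
  moreover have "path_range r (u 0, map e [0..<N]) = u N"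
    using assms(2) by (cases N) (auto simp: path_range_def)
  ultimately show ?thesis ..
qed

lemma infinite_path_of_walk:
  assumes "\<And>i. e i \<in> E1 \<and> s (e i) = u i \<and> r (e i) = u (Suc i)"
  shows "infinite_path E1 r s e"
  using assms by (simp add: infinite_path_def)

text \<open>Follow arbitrarily chosen outgoing edges until reaching a vertex that is not regular;
  if that never happens, the walk is an infinite path.\<close>

lemma boundary_path_from_vertex:
  assumes v: "v \<in> E0"
  shows "\<exists>x\<in>boundary_paths E0 E1 r s. bpath_src s x = v"
proof -
  define out where "out w = (SOME e. e \<in> E1 \<and> s e = w)" for w
  define u where "u = rec_nat v (\<lambda>_ w. r (out w))"
  have u0: "u 0 = v" and uS: "u (Suc n) = r (out (u n))" for n by (simp_all add: u_def)
  have out: "out w \<in> E1 \<and> s (out w) = w" if "regular_vertex E1 s w" for w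
  proof -
    from that obtain e where "e \<in> E1" "s e = w" unfolding regular_vertex_def by auto
    thus ?thesis unfolding out_def by (metis (mono_tags, lifting) someI)
  qed
  show ?thesis
  proof (cases "\<forall>n. regular_vertex E1 s (u n)")
    case True
    hence "infinite_path E1 r s (\<lambda>n. out (u n))"
      using out uS by (intro infinite_path_of_walk) auto
    hence "InfP (\<lambda>n. out (u n)) \<in> boundary_paths E0 E1 r s"
      unfolding boundary_paths_def by blast
    moreover have "bpath_src s (InfP (\<lambda>n. out (u n))) = v" using out True u0 by (metis bpath_src.simps(2))
    ultimately show ?thesis by blast
  next
    case False
    define N where "N = (LEAST n. \<not> regular_vertex E1 s (u n))"
    have "\<not> regular_vertex E1 s (u N)"
      unfolding N_def using False by (metis (mono_tags, lifting) LeastI)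
    moreover have "out (u i) \<in> E1 \<and> s (out (u i)) = u i \<and> r (out (u i)) = u (Suc i)"
      if "i < N" for i
      using out[of "u i"] not_less_Least[OF that[unfolded N_def]] uS[of i] by simp
    hence "finite_path E0 E1 r s (v, map (\<lambda>i. out (u i)) [0..<N])
        \<and> path_range r (v, map (\<lambda>i. out (u i)) [0..<N]) = u N"
      using finite_path_of_walk[where u=u and e="\<lambda>i. out (u i)"] u0 v by metis
    ultimately have "FinP v (map (\<lambda>i. out (u i)) [0..<N]) \<in> boundary_paths E0 E1 r s"
      unfolding boundary_paths_def by auto
    thus ?thesis by force
  qed
qed

lemma edges_with_common_range_eq_if_star_injective:
  assumes "graph E0 E1 r s"
    and inj: "star_injective (graph_groupoid E0 E1 r s) (boundary_paths E0 E1 r s) cocycle_w"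
    and "e \<in> E1" "f \<in> E1" "r e = r f"
  shows "e = f"
proof -
  obtain x where x: "x \<in> boundary_paths E0 E1 r s" and src: "bpath_src s x = r e"
    using boundary_path_from_vertex assms(1,3) unfolding graph_def by metis
  have mem: "(concat_path (s d, [d]) x, 1, x) \<in> star (graph_groupoid E0 E1 r s) x"
    if "d \<in> E1" "r d = r e" for d
  proof -
    have "finite_path E0 E1 r s (s d, [d])" "finite_path E0 E1 r s (r e, [])"
      using that assms(1,3) by (auto simp: finite_path_def graph_def)
    moreover have "concat_path (r e, []) x = x" using src by (cases x) auto
    ultimately have "(concat_path (s d, [d]) x, 1, x) \<in> graph_groupoid E0 E1 r s"
      unfolding graph_groupoid_def using x src that
      by (intro CollectI exI[of _ "(s d, [d])"] exI[of _ "(r e, [])"] exI[of _ x])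
        (simp add: path_len_def path_range_def)
    thus ?thesis by (simp add: star_def)
  qed
  have "inj_on cocycle_w (star (graph_groupoid E0 E1 r s) x)"
    using inj x unfolding star_injective_def by blast
  hence "(concat_path (s e, [e]) x, 1 :: int, x) = (concat_path (s f, [f]) x, 1, x)"
    by (rule inj_onD) (simp_all add: cocycle_w_def mem assms(3-5))
  hence "concat_path (s e, [e]) x = concat_path (s f, [f]) x" by simp
  thus "e = f" by (cases x) (auto dest: fun_cong[where x=0])
qed

lemma star_injective_if_inj_on_range:
  assumes "inj_on r E1"
  shows "star_injective (graph_groupoid E0 E1 r s) (boundary_paths E0 E1 r s) cocycle_w"
  unfolding star_injective_def
proof (intro ballI inj_onI)
  fix x g g'
  assume "g \<in> star (graph_groupoid E0 E1 r s) x" "g' \<in> star (graph_groupoid E0 E1 r s) x"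
    and "cocycle_w g = cocycle_w g'"
  then obtain y y' k where "g = (y, k, x)" "g' = (y', k, x)"
    "(y, k, x) \<in> graph_groupoid E0 E1 r s" "(y', k, x) \<in> graph_groupoid E0 E1 r s"
    unfolding star_def cocycle_w_def by (cases g, cases g') auto
  thus "g = g'" using graph_groupoid_range_eq_if_same_domain_degree[OF assms] by simp
qed

theorem mainTheorem16:
  fixes E0 :: "'v set" and E1 :: "'e set" and r s :: "'e \<Rightarrow> 'v"
  assumes "graph E0 E1 r s"
  shows "star_injective (graph_groupoid E0 E1 r s) (boundary_paths E0 E1 r s) cocycle_w
     \<longleftrightarrow> (\<forall>v\<in>E0. \<forall>e\<in>E1. \<forall>f\<in>E1. r e = v \<and> r f = v \<longrightarrow> e = f)"
proof -
  have "(\<forall>v\<in>E0. \<forall>e\<in>E1. \<forall>f\<in>E1. r e = v \<and> r f = v \<longrightarrow> e = f) \<longleftrightarrow> inj_on r E1"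
    using assms by (auto simp: graph_def inj_on_def)
  moreover have "star_injective (graph_groupoid E0 E1 r s) (boundary_paths E0 E1 r s) cocycle_w
      \<longleftrightarrow> inj_on r E1"
    using edges_with_common_range_eq_if_star_injective[OF assms] star_injective_if_inj_on_range
    by (meson inj_onI)
  ultimately show ?thesis by simp
qed

end
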